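(* Let $0<\underline\theta\le\bar\theta<\infty$. There exists a constant $C>0$ depending only on $\nu,\underline\theta,\bar\theta$ such that for all $\delta\in(0,1]$, all $\theta\in[\underline\theta,\bar\theta]$ and all $\lambda\in[-\pi,\pi]$: $$C^{-1}\delta^{2\nu}\le g^*_{\nu,\delta\theta}(\lambda)\le g^\delta_{\nu,\theta}(\lambda)\le g^*_{\nu,\delta\theta}(\lambda)+C\delta^{2\nu},$$ and $$g^*_{\nu,\delta\theta}(\lambda)\,\big|h^\delta_{\nu,\theta}(\lambda)-\delta\,h^*_{\nu,\delta\theta}(\lambda)\big|\le C\delta^{2\nu}.$$
   Context: Fix $\nu\ge1/2$. For $\alpha>0$, $\omega\in\mathbb R$ let $g^*_{\nu,\alpha}(\omega)=C_\nu\alpha^{2\nu}(\alpha^2+\omega^2)^{-(\nu+1/2)}$ with $C_\nu=\Gamma(\nu+\frac12)/(\sqrt\pi\,\Gamma(\nu))$, and $h^*_{\nu,\alpha}=\partial\log g^*_{\nu,\alpha}/\partial\alpha$. For $\delta,\theta>0$ and $\lambda\in[-\pi,\pi]$ let $g^\delta_{\nu,\theta}(\lambda)=\sum_{k\in\mathbb Z}g^*_{\nu,\delta\theta}(\lambda+2k\pi)$ and $h^\delta_{\nu,\theta}=\partial\log g^\delta_{\nu,\theta}/\partial\theta$. *)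

theory Defs
  imports "HOL-Analysis.Analysis"
begin

definition C_nu :: "real \<Rightarrow> real" where
  "C_nu \<nu> = Gamma (\<nu> + 1/2) / (sqrt pi * Gamma \<nu>)"

definition gstar :: "real \<Rightarrow> real \<Rightarrow> real \<Rightarrow> real" where
  "gstar \<nu> \<alpha> \<omega> = C_nu \<nu> * \<alpha> powr (2 * \<nu>) * (\<alpha>\<^sup>2 + \<omega>\<^sup>2) powr (-(\<nu> + 1/2))"

definition hstar :: "real \<Rightarrow> real \<Rightarrow> real \<Rightarrow> real" where
  "hstar \<nu> \<alpha> \<omega> = deriv (\<lambda>a. ln (gstar \<nu> a \<omega>)) \<alpha>"

definition gdelta :: "real \<Rightarrow> real \<Rightarrow> real \<Rightarrow> real \<Rightarrow> real" where
  "gdelta \<nu> \<delta> \<theta> l = (\<Sum>\<^sub>\<infinity>k::int. gstar \<nu> (\<delta> * \<theta>) (l + 2 * of_int k * pi))"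

definition hdelta :: "real \<Rightarrow> real \<Rightarrow> real \<Rightarrow> real \<Rightarrow> real" where
  "hdelta \<nu> \<delta> \<theta> l = deriv (\<lambda>t. ln (gdelta \<nu> \<delta> t l)) \<theta>"

end

theory Submission
  imports Defs
begin

(*
  Write  g(\<alpha>,\<omega>) = gstar \<nu> \<alpha> \<omega>  and  G(\<alpha>,\<lambda>) = \<Sum>_k g(\<alpha>, \<lambda> + 2k\<pi>), so that
  gdelta \<nu> \<delta> \<theta> \<lambda> = G(\<delta>\<theta>, \<lambda>).  All estimates are first proved in the single
  scale variable \<alpha> = \<delta>\<theta> and only at the very end rescaled.

  1. The score  \<partial>\<^sub>\<alpha> log g = 2\<nu>/\<alpha> - (2\<nu>+1)\<alpha>/(\<alpha>\<^sup>2+\<omega>\<^sup>2)  is computed explicitly and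
     bounded by (4\<nu>+1)/\<alpha>, uniformly in \<omega>.
  2. For |\<lambda>| \<le> \<pi> and k \<noteq> 0 the alias g(\<alpha>, \<lambda>+2k\<pi>) is at most C_\<nu> \<alpha>^{2\<nu>} / k\<^sup>2
     (this uses \<nu> \<ge> 1/2).  Hence G = g + T, where the tail T (the sum over
     k \<noteq> 0, folded into pairs \<plusminus>k) satisfies 0 \<le> T \<le> 2 C_\<nu> \<alpha>^{2\<nu>} \<Sum> 1/n\<^sup>2.
  3. The tail may be differentiated termwise (Weierstrass M-test on a
     neighbourhood of \<alpha>), and by step 1 its derivative satisfies
     |T'| \<le> (4\<nu>+1)/\<alpha> T.  An elementary quotient estimate then gives
     g |G'/G - g'/g| \<le> 2 (4\<nu>+1)/\<alpha> T.
  4. Rescaling \<alpha> = \<delta>\<theta> turns these into the three upper estimates at a point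
     (aliased_density_estimates); with the elementary lower bound
     g(\<delta>\<theta>,\<lambda>) \<ge> c \<delta>^{2\<nu>} (gstar_lower_bound) the theorem only has to choose C.
*)

section \<open>The Matern density and its score\<close>

text \<open>The logarithmic derivative of the Matern density with respect to the scale.\<close>
definition matern_score :: "real \<Rightarrow> real \<Rightarrow> real \<Rightarrow> real" where
  "matern_score \<nu> \<alpha> \<omega> = 2*\<nu>/\<alpha> - (2*\<nu>+1)*\<alpha>/(\<alpha>\<^sup>2+\<omega>\<^sup>2)"

lemma C_nu_pos: "\<nu> > 0 \<Longrightarrow> C_nu \<nu> > 0"
  unfolding C_nu_def by (auto intro!: divide_pos_pos mult_pos_pos)

lemma gstar_pos: "\<nu> > 0 \<Longrightarrow> \<alpha> > 0 \<Longrightarrow> gstar \<nu> \<alpha> \<omega> > 0"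
  unfolding gstar_def using C_nu_pos[of \<nu>]
  by (auto intro!: mult_pos_pos simp: add_pos_nonneg)

lemma gstar_has_derivative:
  assumes "\<nu> > 0" "\<alpha> > 0"
  shows "((\<lambda>a. gstar \<nu> a \<omega>) has_real_derivative gstar \<nu> \<alpha> \<omega> * matern_score \<nu> \<alpha> \<omega>) (at \<alpha>)"
proof -
  define X where "X = \<alpha>\<^sup>2 + \<omega>\<^sup>2"
  have X: "X > 0" unfolding X_def using assms by (simp add: add_pos_nonneg)
  have "((\<lambda>a. C_nu \<nu> * a powr (2 * \<nu>) * (a\<^sup>2 + \<omega>\<^sup>2) powr (-(\<nu> + 1/2))) has_real_derivative
     C_nu \<nu> * ((2*\<nu>) * \<alpha> powr (2*\<nu> - 1)) * X powr (-(\<nu> + 1/2))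
     + C_nu \<nu> * \<alpha> powr (2 * \<nu>) * ((-(\<nu> + 1/2)) * X powr (-(\<nu> + 1/2) - 1) * (2*\<alpha>))) (at \<alpha>)"
    using assms X unfolding X_def
    by (auto intro!: derivative_eq_intros DERIV_fun_powr[where r="-(\<nu> + 1/2)", simplified])
  moreover have "C_nu \<nu> * ((2*\<nu>) * \<alpha> powr (2*\<nu> - 1)) * X powr (-(\<nu> + 1/2))
     + C_nu \<nu> * \<alpha> powr (2 * \<nu>) * ((-(\<nu> + 1/2)) * X powr (-(\<nu> + 1/2) - 1) * (2*\<alpha>))
     = gstar \<nu> \<alpha> \<omega> * matern_score \<nu> \<alpha> \<omega>"
  proof -
    have "\<alpha> powr (2*\<nu> - 1) = \<alpha> powr (2*\<nu>) / \<alpha>"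
      using assms by (simp add: powr_diff)
    moreover have "X powr (-(\<nu> + 1/2) - 1) = X powr (-(\<nu> + 1/2)) / X"
      using X by (subst powr_diff) auto
    moreover have "C*(2*\<nu>*(P/\<alpha>))*Q + C*P*(-(\<nu>+1/2)*(Q/X)*(2*\<alpha>))
                   = C*P*Q*(2*\<nu>/\<alpha> - (2*\<nu>+1)*\<alpha>/X)" for C P Q :: real
      using X assms by (simp add: field_simps)
    ultimately show ?thesis unfolding gstar_def matern_score_def X_def by simp
  qed
  ultimately show ?thesis unfolding gstar_def X_def by simp
qed

lemma hstar_eq_matern_score:
  assumes "\<nu> > 0" "\<alpha> > 0"
  shows "hstar \<nu> \<alpha> \<omega> = matern_score \<nu> \<alpha> \<omega>"
proof -
  have "((\<lambda>a. ln (gstar \<nu> a \<omega>)) has_real_derivative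
          (gstar \<nu> \<alpha> \<omega> * matern_score \<nu> \<alpha> \<omega>) / gstar \<nu> \<alpha> \<omega>) (at \<alpha>)"
    using gstar_has_derivative[OF assms] gstar_pos[OF assms]
    by (auto intro!: derivative_eq_intros)
  then show ?thesis
    unfolding hstar_def using gstar_pos[OF assms, of \<omega>] by (auto dest!: DERIV_imp_deriv)
qed

lemma matern_score_bound:
  assumes "\<nu> \<ge> 0" "\<alpha> > 0"
  shows "\<bar>matern_score \<nu> \<alpha> \<omega>\<bar> \<le> (4*\<nu>+1)/\<alpha>"
proof -
  have X: "\<alpha>\<^sup>2 + \<omega>\<^sup>2 > 0" using assms by (simp add: add_pos_nonneg)
  have "\<alpha>/(\<alpha>\<^sup>2+\<omega>\<^sup>2) \<le> 1/\<alpha>"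
    using assms X by (simp add: field_simps power2_eq_square)
  then have "(2*\<nu>+1) * (\<alpha>/(\<alpha>\<^sup>2+\<omega>\<^sup>2)) \<le> (2*\<nu>+1) * (1/\<alpha>)"
    using assms by (intro mult_left_mono) auto
  moreover have "0 \<le> (2*\<nu>+1)*\<alpha>/(\<alpha>\<^sup>2+\<omega>\<^sup>2)" "0 \<le> 2*\<nu>/\<alpha>"
    using assms X by simp_all
  moreover have "2*\<nu>/\<alpha> + (2*\<nu>+1)/\<alpha> = (4*\<nu>+1)/\<alpha>"
    by (simp add: add_divide_distrib[symmetric])
  ultimately show ?thesis unfolding matern_score_def by (simp add: abs_le_iff)
qed

lemma gstar_lower_bound:
  assumes nu: "\<nu> > 0" and d: "0 < \<delta>" "\<delta> \<le> 1"
    and th: "0 < \<theta>lo" "\<theta>lo \<le> \<theta>" "\<theta> \<le> \<theta>hi" and l: "\<bar>l\<bar> \<le> pi"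
  shows "C_nu \<nu> * \<theta>lo powr (2*\<nu>) * (\<theta>hi\<^sup>2 + pi\<^sup>2) powr (-(\<nu>+1/2)) * \<delta> powr (2*\<nu>)
           \<le> gstar \<nu> (\<delta>*\<theta>) l"
proof -
  have "\<delta>*\<theta> \<le> 1*\<theta>" using d th by (intro mult_right_mono) auto
  then have dt: "0 < \<delta>*\<theta>" "\<delta>*\<theta> \<le> \<theta>hi" using d th by (simp, linarith)
  have X: "0 < (\<delta>*\<theta>)\<^sup>2 + l\<^sup>2" using dt by (intro add_pos_nonneg) auto
  have "(\<delta>*\<theta>)\<^sup>2 \<le> \<theta>hi\<^sup>2" using dt by (intro power_mono) auto
  moreover have "l\<^sup>2 \<le> pi\<^sup>2" using l by (metis abs_ge_zero power2_abs power_mono)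
  ultimately have "(\<delta>*\<theta>)\<^sup>2 + l\<^sup>2 \<le> \<theta>hi\<^sup>2 + pi\<^sup>2" by linarith
  then have freq: "(\<theta>hi\<^sup>2 + pi\<^sup>2) powr (-(\<nu>+1/2)) \<le> ((\<delta>*\<theta>)\<^sup>2 + l\<^sup>2) powr (-(\<nu>+1/2))"
    using powr_mono2'[OF _ X] nu by simp
  have scale: "\<theta>lo powr (2*\<nu>) * \<delta> powr (2*\<nu>) \<le> (\<delta>*\<theta>) powr (2*\<nu>)"
    using th d nu by (simp add: powr_mult powr_mono2 mult.commute mult_right_mono)
  have "C_nu \<nu> * (\<theta>lo powr (2*\<nu>) * \<delta> powr (2*\<nu>)) * (\<theta>hi\<^sup>2 + pi\<^sup>2) powr (-(\<nu>+1/2))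
         \<le> C_nu \<nu> * (\<delta>*\<theta>) powr (2*\<nu>) * ((\<delta>*\<theta>)\<^sup>2 + l\<^sup>2) powr (-(\<nu>+1/2))"
    using C_nu_pos[OF nu] freq scale by (intro mult_mono mult_left_mono) auto
  then show ?thesis unfolding gstar_def by (simp add: mult_ac)
qed

section \<open>Sums over the integers\<close>

lemma has_sum_int_symmetric:
  fixes f :: "int \<Rightarrow> real"
  assumes nonneg: "\<And>k. f k \<ge> 0" and pairs: "summable (\<lambda>n. f (int (Suc n)) + f (- int (Suc n)))"
  shows "(f has_sum (f 0 + (\<Sum>n. f (int (Suc n)) + f (- int (Suc n))))) UNIV"
proof -
  have pos: "summable (\<lambda>n. f (int (Suc n)))"
    by (rule summable_comparison_test'[OF pairs, of 0]) (use nonneg in \<open>auto intro: add_increasing2\<close>)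
  have neg: "summable (\<lambda>n. f (- int (Suc n)))"
    by (rule summable_comparison_test'[OF pairs, of 0]) (use nonneg in \<open>auto intro: add_increasing\<close>)
  have "range (\<lambda>n. int (Suc n)) = {k. k > 0}"
    by (auto simp: image_iff intro!: exI[of _ "nat (_ - 1)"])
  moreover have "range (\<lambda>n. - int (Suc n)) = {k. k < 0}"
    by (auto simp: image_iff intro!: exI[of _ "nat (- _ - 1)"])
  moreover have "((\<lambda>n. f (int (Suc n))) has_sum (\<Sum>n. f (int (Suc n)))) UNIV"
    "((\<lambda>n. f (- int (Suc n))) has_sum (\<Sum>n. f (- int (Suc n)))) UNIV"
    using pos neg nonneg by (auto intro!: sums_nonneg_imp_has_sum summable_sums)
  ultimately have "(f has_sum (\<Sum>n. f (int (Suc n)))) {k. k > 0}"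
    "(f has_sum (\<Sum>n. f (- int (Suc n)))) {k. k < 0}"
    using has_sum_reindex[of "\<lambda>n. int (Suc n)" UNIV f]
      has_sum_reindex[of "\<lambda>n. - int (Suc n)" UNIV f]
    by (auto simp: inj_on_def comp_def)
  moreover have "(f has_sum f 0) {0}" using has_sum_finite[of "{0::int}" f] by simp
  ultimately have "(f has_sum (f 0 + ((\<Sum>n. f (int (Suc n))) + (\<Sum>n. f (- int (Suc n))))))
                     ({0} \<union> ({k. k > 0} \<union> {k. k < 0}))"
    by (intro has_sum_Un_disjoint) auto
  moreover have "{0} \<union> ({k. k > 0} \<union> {k::int. k < 0}) = UNIV" by auto
  ultimately show ?thesis using suminf_add[OF pos neg] by simp
qed

definition inv_square_sum :: real where
  "inv_square_sum = (\<Sum>n. inverse (real (Suc n) ^ 2))"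

lemma summable_inv_square: "summable (\<lambda>n. inverse (real (Suc n) ^ 2))"
  using inverse_power_summable[of 2, where 'a=real] by (subst summable_Suc_iff) simp

lemma inv_square_sum_nonneg: "inv_square_sum \<ge> 0"
  unfolding inv_square_sum_def using summable_inv_square by (simp add: suminf_nonneg)

section \<open>Aliases of the Matern density\<close>

definition aliased :: "real \<Rightarrow> real \<Rightarrow> real \<Rightarrow> int \<Rightarrow> real" where
  "aliased \<nu> \<alpha> l k = gstar \<nu> \<alpha> (l + 2 * of_int k * pi)"

definition alias_sum :: "real \<Rightarrow> real \<Rightarrow> real \<Rightarrow> real" where
  "alias_sum \<nu> \<alpha> l = (\<Sum>\<^sub>\<infinity>k. aliased \<nu> \<alpha> l k)"

lemma gdelta_eq_alias_sum: "gdelta \<nu> \<delta> \<theta> l = alias_sum \<nu> (\<delta>*\<theta>) l"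
  unfolding gdelta_def alias_sum_def aliased_def ..

definition alias_pair :: "real \<Rightarrow> real \<Rightarrow> real \<Rightarrow> nat \<Rightarrow> real" where
  "alias_pair \<nu> \<alpha> l n = aliased \<nu> \<alpha> l (int (Suc n)) + aliased \<nu> \<alpha> l (- int (Suc n))"

definition alias_tail :: "real \<Rightarrow> real \<Rightarrow> real \<Rightarrow> real" where
  "alias_tail \<nu> \<alpha> l = (\<Sum>n. alias_pair \<nu> \<alpha> l n)"

lemma aliased_nonneg: "\<nu> > 0 \<Longrightarrow> \<alpha> > 0 \<Longrightarrow> aliased \<nu> \<alpha> l k \<ge> 0"
  unfolding aliased_def using gstar_pos[of \<nu> \<alpha>] by (simp add: less_imp_le)

text \<open>Polynomial decay of the aliases: for |\<lambda>| \<le> \<pi> the k-th alias frequency has modulus at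
  least |k|, and the exponent \<nu> + 1/2 \<ge> 1 gives decay of order 1/k^2.\<close>
lemma aliased_decay:
  fixes k :: int
  assumes "\<nu> \<ge> 1/2" "\<alpha> > 0" "\<bar>l\<bar> \<le> pi" "k \<noteq> 0"
  shows "aliased \<nu> \<alpha> l k \<le> C_nu \<nu> * \<alpha> powr (2*\<nu>) / (of_int k)\<^sup>2"
proof -
  define w where "w = l + 2 * of_int k * pi"
  have k1: "\<bar>real_of_int k\<bar> \<ge> 1" using assms(4) by linarith
  have "\<bar>w\<bar> \<ge> 2 * \<bar>of_int k\<bar> * pi - pi"
    unfolding w_def using assms(3) by (simp add: abs_mult)
  moreover have "2 * \<bar>real_of_int k\<bar> * pi - pi \<ge> \<bar>of_int k\<bar> * pi"
    using mult_right_mono[OF k1, of pi] by simp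
  moreover have "\<bar>real_of_int k\<bar> * pi \<ge> \<bar>of_int k\<bar>"
    using mult_left_mono[of 1 pi "\<bar>real_of_int k\<bar>"] pi_gt3 by simp
  ultimately have "\<bar>w\<bar> \<ge> \<bar>of_int k\<bar>" by linarith
  then have wk: "w\<^sup>2 \<ge> (of_int k)\<^sup>2" by (metis abs_ge_zero power2_abs power_mono)
  define X where "X = \<alpha>\<^sup>2 + w\<^sup>2"
  have kk: "(real_of_int k)\<^sup>2 \<ge> 1" using power_mono[OF k1, of 2] by simp
  have Xk: "X \<ge> (of_int k)\<^sup>2" unfolding X_def using wk zero_le_power2[of \<alpha>] by linarith
  have "X powr (-(\<nu>+1/2)) \<le> X powr (-1)" using Xk kk assms(1) by (intro powr_mono) auto
  also have "\<dots> = 1 / X" using Xk kk by (simp add: powr_minus_divide)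
  also have "\<dots> \<le> 1 / (of_int k)\<^sup>2" using Xk kk by (intro divide_left_mono mult_pos_pos) auto
  finally have "C_nu \<nu> * \<alpha> powr (2*\<nu>) * X powr (-(\<nu>+1/2)) \<le> C_nu \<nu> * \<alpha> powr (2*\<nu>) * (1 / (of_int k)\<^sup>2)"
    using C_nu_pos[of \<nu>] assms(1) by (intro mult_left_mono) auto
  then show ?thesis unfolding aliased_def gstar_def X_def w_def by simp
qed

lemma alias_pair_bounds:
  assumes "\<nu> \<ge> 1/2" "\<alpha> > 0" "\<bar>l\<bar> \<le> pi"
  shows "0 \<le> alias_pair \<nu> \<alpha> l n"
    and "alias_pair \<nu> \<alpha> l n \<le> 2 * C_nu \<nu> * \<alpha> powr (2*\<nu>) * inverse (real (Suc n) ^ 2)"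
proof -
  show "0 \<le> alias_pair \<nu> \<alpha> l n"
    unfolding alias_pair_def using aliased_nonneg[of \<nu> \<alpha>] assms by (simp add: add_nonneg_nonneg)
  have "aliased \<nu> \<alpha> l k \<le> C_nu \<nu> * \<alpha> powr (2*\<nu>) * inverse (real (Suc n) ^ 2)"
    if "k = int (Suc n) \<or> k = - int (Suc n)" for k
    using aliased_decay[OF assms, of k] that by (auto simp: divide_inverse simp del: of_nat_Suc)
  from this[of "int (Suc n)"] this[of "- int (Suc n)"] show "alias_pair \<nu> \<alpha> l n \<le> 2 * C_nu \<nu> * \<alpha> powr (2*\<nu>) * inverse (real (Suc n) ^ 2)"
    unfolding alias_pair_def by simp
qed

lemma summable_alias_pair:
  assumes "\<nu> \<ge> 1/2" "\<alpha> > 0" "\<bar>l\<bar> \<le> pi"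
  shows "summable (alias_pair \<nu> \<alpha> l)"
  by (rule summable_comparison_test'[OF summable_mult[OF summable_inv_square], of 0])
     (use alias_pair_bounds[OF assms] in auto)

lemma alias_sum_split:
  assumes "\<nu> \<ge> 1/2" "\<alpha> > 0" "\<bar>l\<bar> \<le> pi"
  shows "alias_sum \<nu> \<alpha> l = gstar \<nu> \<alpha> l + alias_tail \<nu> \<alpha> l"
proof -
  have "(aliased \<nu> \<alpha> l has_sum (aliased \<nu> \<alpha> l 0 + alias_tail \<nu> \<alpha> l)) UNIV"
    unfolding alias_tail_def alias_pair_def
    using has_sum_int_symmetric[of "aliased \<nu> \<alpha> l"] aliased_nonneg[of \<nu> \<alpha>]
      summable_alias_pair[OF assms] assms
    by (simp add: alias_pair_def[abs_def])
  then show ?thesis unfolding alias_sum_def by (simp add: infsumI aliased_def)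
qed

lemma alias_tail_bounds:
  assumes "\<nu> \<ge> 1/2" "\<alpha> > 0" "\<bar>l\<bar> \<le> pi"
  shows "0 \<le> alias_tail \<nu> \<alpha> l"
    and "alias_tail \<nu> \<alpha> l \<le> 2 * C_nu \<nu> * \<alpha> powr (2*\<nu>) * inv_square_sum"
proof -
  show "0 \<le> alias_tail \<nu> \<alpha> l"
    unfolding alias_tail_def using alias_pair_bounds(1)[OF assms] summable_alias_pair[OF assms]
    by (simp add: suminf_nonneg)
  have "alias_tail \<nu> \<alpha> l \<le> (\<Sum>n. 2 * C_nu \<nu> * \<alpha> powr (2*\<nu>) * inverse (real (Suc n) ^ 2))"
    unfolding alias_tail_def using alias_pair_bounds(2)[OF assms] summable_alias_pair[OF assms]
    by (intro suminf_le summable_mult summable_inv_square) auto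
  also have "\<dots> = 2 * C_nu \<nu> * \<alpha> powr (2*\<nu>) * inv_square_sum"
    unfolding inv_square_sum_def by (rule suminf_mult[OF summable_inv_square])
  finally show "alias_tail \<nu> \<alpha> l \<le> 2 * C_nu \<nu> * \<alpha> powr (2*\<nu>) * inv_square_sum" .
qed

section \<open>Differentiating the aliased density\<close>

definition aliased_deriv :: "real \<Rightarrow> real \<Rightarrow> real \<Rightarrow> int \<Rightarrow> real" where
  "aliased_deriv \<nu> \<alpha> l k = aliased \<nu> \<alpha> l k * matern_score \<nu> \<alpha> (l + 2 * of_int k * pi)"

definition alias_pair_deriv :: "real \<Rightarrow> real \<Rightarrow> real \<Rightarrow> nat \<Rightarrow> real" where
  "alias_pair_deriv \<nu> \<alpha> l n = aliased_deriv \<nu> \<alpha> l (int (Suc n)) + aliased_deriv \<nu> \<alpha> l (- int (Suc n))"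

lemma aliased_has_derivative:
  "\<nu> > 0 \<Longrightarrow> \<alpha> > 0 \<Longrightarrow> ((\<lambda>a. aliased \<nu> a l k) has_real_derivative aliased_deriv \<nu> \<alpha> l k) (at \<alpha>)"
  unfolding aliased_def aliased_deriv_def by (rule gstar_has_derivative)

lemma aliased_deriv_bound:
  assumes "\<nu> > 0" "\<alpha> > 0"
  shows "\<bar>aliased_deriv \<nu> \<alpha> l k\<bar> \<le> (4*\<nu>+1)/\<alpha> * aliased \<nu> \<alpha> l k"
  using mult_left_mono[OF matern_score_bound, of \<nu> \<alpha> "aliased \<nu> \<alpha> l k"] aliased_nonneg[OF assms] assms
  unfolding aliased_deriv_def by (simp add: abs_mult mult.commute[of "aliased \<nu> \<alpha> l k"])

lemma alias_pair_has_derivative: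
  "\<nu> > 0 \<Longrightarrow> \<alpha> > 0 \<Longrightarrow> ((\<lambda>a. alias_pair \<nu> a l n) has_real_derivative alias_pair_deriv \<nu> \<alpha> l n) (at \<alpha>)"
  unfolding alias_pair_def alias_pair_deriv_def by (intro DERIV_add aliased_has_derivative)

lemma alias_pair_deriv_bound:
  assumes "\<nu> > 0" "\<alpha> > 0"
  shows "\<bar>alias_pair_deriv \<nu> \<alpha> l n\<bar> \<le> (4*\<nu>+1)/\<alpha> * alias_pair \<nu> \<alpha> l n"
  using aliased_deriv_bound[OF assms, of l "int (Suc n)"] aliased_deriv_bound[OF assms, of l "- int (Suc n)"]
  unfolding alias_pair_deriv_def alias_pair_def by (simp add: distrib_left)

text \<open>The tail is differentiable and may be differentiated termwise: on the neighbourhood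
  (\<alpha>/2, 2\<alpha>) the derived series is dominated by a multiple of \<Sum> 1/n^2.\<close>
lemma alias_tail_has_derivative:
  assumes nu: "\<nu> \<ge> 1/2" and a: "\<alpha> > 0" and l: "\<bar>l\<bar> \<le> pi"
  shows "((\<lambda>a. alias_tail \<nu> a l) has_real_derivative (\<Sum>n. alias_pair_deriv \<nu> \<alpha> l n)) (at \<alpha>)"
proof -
  define S where "S = {\<alpha>/2 <..< 2*\<alpha>}"
  have S: "t > \<alpha>/2" "t < 2*\<alpha>" "t > 0" if "t \<in> S" for t using that a unfolding S_def by auto
  define M where "M n = (4*\<nu>+1)/(\<alpha>/2) * (2 * C_nu \<nu> * (2*\<alpha>) powr (2*\<nu>) * inverse (real (Suc n) ^ 2))" for n
  have dominated: "norm (alias_pair_deriv \<nu> t l n) \<le> M n" if "t \<in> S" for n t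
  proof -
    have "norm (alias_pair_deriv \<nu> t l n) \<le> (4*\<nu>+1)/t * alias_pair \<nu> t l n"
      using alias_pair_deriv_bound[of \<nu> t] nu S[OF that] by simp
    also have "\<dots> \<le> (4*\<nu>+1)/(\<alpha>/2) * alias_pair \<nu> t l n"
      using alias_pair_bounds(1)[OF nu _ l] S[OF that] nu a
      by (intro mult_right_mono divide_left_mono) auto
    also have "\<dots> \<le> M n"
      unfolding M_def
    proof (intro mult_left_mono)
      have "alias_pair \<nu> t l n \<le> 2 * C_nu \<nu> * t powr (2*\<nu>) * inverse (real (Suc n) ^ 2)"
        using alias_pair_bounds(2)[OF nu _ l] S[OF that] by simp
      also have "\<dots> \<le> 2 * C_nu \<nu> * (2*\<alpha>) powr (2*\<nu>) * inverse (real (Suc n) ^ 2)"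
        using S[OF that] C_nu_pos[of \<nu>] nu
        by (intro mult_right_mono mult_left_mono powr_mono2) auto
      finally show "alias_pair \<nu> t l n \<le> 2 * C_nu \<nu> * (2*\<alpha>) powr (2*\<nu>) * inverse (real (Suc n) ^ 2)" .
    qed (use a nu in simp)
    finally show ?thesis .
  qed
  have "summable M"
    unfolding M_def[abs_def] by (intro summable_mult summable_inv_square)
  then have "uniformly_convergent_on S (\<lambda>n t. \<Sum>i<n. alias_pair_deriv \<nu> t l i)"
    using dominated by (intro Weierstrass_m_test')
  moreover have "((\<lambda>a. alias_pair \<nu> a l n) has_field_derivative alias_pair_deriv \<nu> t l n) (at t within S)"
    if "t \<in> S" for n t
    using alias_pair_has_derivative[of \<nu> t l n] nu S[OF that] by (simp add: has_field_derivative_at_within)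
  moreover have "\<alpha> \<in> S" "\<alpha> \<in> interior S" "convex S" using a by (auto simp: S_def)
  ultimately show ?thesis
    unfolding alias_tail_def
    using has_field_derivative_series'(2)[of S "\<lambda>n a. alias_pair \<nu> a l n"
        "\<lambda>n t. alias_pair_deriv \<nu> t l n" \<alpha> \<alpha>] summable_alias_pair[OF nu a l]
    by simp
qed

lemma alias_tail_deriv_bound:
  assumes nu: "\<nu> \<ge> 1/2" and a: "\<alpha> > 0" and l: "\<bar>l\<bar> \<le> pi"
  shows "\<bar>\<Sum>n. alias_pair_deriv \<nu> \<alpha> l n\<bar> \<le> (4*\<nu>+1)/\<alpha> * alias_tail \<nu> \<alpha> l"
proof -
  have bound: "\<bar>alias_pair_deriv \<nu> \<alpha> l n\<bar> \<le> (4*\<nu>+1)/\<alpha> * alias_pair \<nu> \<alpha> l n" for n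
    using alias_pair_deriv_bound[of \<nu> \<alpha>] nu a by simp
  have summable: "summable (\<lambda>n. (4*\<nu>+1)/\<alpha> * alias_pair \<nu> \<alpha> l n)"
    by (intro summable_mult summable_alias_pair[OF assms])
  have abs_summable: "summable (\<lambda>n. \<bar>alias_pair_deriv \<nu> \<alpha> l n\<bar>)"
    by (rule summable_comparison_test'[OF summable, of 0]) (use bound in simp)
  have "\<bar>\<Sum>n. alias_pair_deriv \<nu> \<alpha> l n\<bar> \<le> (\<Sum>n. \<bar>alias_pair_deriv \<nu> \<alpha> l n\<bar>)"
    by (rule summable_rabs[OF abs_summable])
  also have "\<dots> \<le> (\<Sum>n. (4*\<nu>+1)/\<alpha> * alias_pair \<nu> \<alpha> l n)"
    by (rule suminf_le[OF bound abs_summable summable])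
  also have "\<dots> = (4*\<nu>+1)/\<alpha> * alias_tail \<nu> \<alpha> l"
    unfolding alias_tail_def by (rule suminf_mult[OF summable_alias_pair[OF assms]])
  finally show ?thesis .
qed

lemma alias_sum_has_derivative:
  assumes nu: "\<nu> \<ge> 1/2" and a: "\<alpha> > 0" and l: "\<bar>l\<bar> \<le> pi"
  shows "((\<lambda>a. alias_sum \<nu> a l) has_real_derivative
           gstar \<nu> \<alpha> l * matern_score \<nu> \<alpha> l + (\<Sum>n. alias_pair_deriv \<nu> \<alpha> l n)) (at \<alpha>)"
proof (rule has_field_derivative_transform_within_open)
  show "((\<lambda>a. gstar \<nu> a l + alias_tail \<nu> a l) has_real_derivative
           gstar \<nu> \<alpha> l * matern_score \<nu> \<alpha> l + (\<Sum>n. alias_pair_deriv \<nu> \<alpha> l n)) (at \<alpha>)"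
    using nu a by (intro DERIV_add gstar_has_derivative alias_tail_has_derivative l) auto
  show "gstar \<nu> a l + alias_tail \<nu> a l = alias_sum \<nu> a l" if "a \<in> {0<..}" for a
    using alias_sum_split[OF nu _ l, of a] that by simp
qed (use a in auto)

section \<open>The score of the aliased density\<close>

lemma perturbed_quotient_bound:
  fixes x R R' p q :: real
  assumes "x > 0" "R \<ge> 0" "\<bar>p\<bar> \<le> q" "\<bar>R'\<bar> \<le> q * R"
  shows "x * \<bar>(x*p + R')/(x+R) - p\<bar> \<le> 2*q*R"
proof -
  have xR: "x + R > 0" using assms by simp
  have "(x*p + R')/(x+R) - p = (R' - p*R)/(x+R)" using xR by (simp add: field_simps)
  then have "x * \<bar>(x*p + R')/(x+R) - p\<bar> = (x/(x+R)) * \<bar>R' - p*R\<bar>" using xR by (simp add: abs_div)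
  also have "\<dots> \<le> 1 * \<bar>R' - p*R\<bar>" using assms xR by (intro mult_right_mono) auto
  also have "\<dots> \<le> \<bar>R'\<bar> + \<bar>p\<bar>*R" using assms by (simp add: abs_mult abs_triangle_ineq4[THEN order_trans])
  also have "\<dots> \<le> q*R + q*R" using assms by (intro add_mono mult_right_mono) auto
  finally show ?thesis by (simp add: algebra_simps)
qed

lemma hdelta_eq:
  assumes nu: "\<nu> \<ge> 1/2" and d: "\<delta> > 0" and th: "\<theta> > 0" and l: "\<bar>l\<bar> \<le> pi"
  shows "hdelta \<nu> \<delta> \<theta> l = \<delta> * ((gstar \<nu> (\<delta>*\<theta>) l * matern_score \<nu> (\<delta>*\<theta>) l
                                + (\<Sum>n. alias_pair_deriv \<nu> (\<delta>*\<theta>) l n)) / alias_sum \<nu> (\<delta>*\<theta>) l)"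
proof -
  define D where "D = gstar \<nu> (\<delta>*\<theta>) l * matern_score \<nu> (\<delta>*\<theta>) l + (\<Sum>n. alias_pair_deriv \<nu> (\<delta>*\<theta>) l n)"
  have a: "\<delta>*\<theta> > 0" using d th by simp
  have pos: "alias_sum \<nu> (\<delta>*\<theta>) l > 0"
    using alias_sum_split[OF nu a l] alias_tail_bounds(1)[OF nu a l] gstar_pos[of \<nu> "\<delta>*\<theta>" l] nu a
    by simp
  have "((\<lambda>t. \<delta>*t) has_real_derivative \<delta>) (at \<theta>)" by (auto intro!: derivative_eq_intros)
  from DERIV_chain2[OF alias_sum_has_derivative[OF nu a l] this]
  have "((\<lambda>t. alias_sum \<nu> (\<delta>*t) l) has_real_derivative D * \<delta>) (at \<theta>)" unfolding D_def .
  then have "((\<lambda>t. ln (alias_sum \<nu> (\<delta>*t) l)) has_real_derivative D * \<delta> / alias_sum \<nu> (\<delta>*\<theta>) l) (at \<theta>)"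
    using pos by (auto intro!: derivative_eq_intros)
  then show ?thesis
    unfolding hdelta_def gdelta_eq_alias_sum D_def[symmetric] by (simp add: DERIV_imp_deriv)
qed

lemma hdelta_score_error:
  assumes nu: "\<nu> \<ge> 1/2" and d: "\<delta> > 0" and th: "\<theta> > 0" and l: "\<bar>l\<bar> \<le> pi"
  shows "gstar \<nu> (\<delta>*\<theta>) l * \<bar>hdelta \<nu> \<delta> \<theta> l - \<delta> * hstar \<nu> (\<delta>*\<theta>) l\<bar>
           \<le> 2*(4*\<nu>+1)/\<theta> * alias_tail \<nu> (\<delta>*\<theta>) l"
proof -
  define \<alpha> where "\<alpha> = \<delta>*\<theta>"
  define g where "g = gstar \<nu> \<alpha> l"
  define s where "s = matern_score \<nu> \<alpha> l"
  define T where "T = alias_tail \<nu> \<alpha> l"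
  define q where "q = (4*\<nu>+1)/\<alpha>"
  have a: "\<alpha> > 0" unfolding \<alpha>_def using d th by simp
  have g: "g > 0" unfolding g_def using gstar_pos[of \<nu> \<alpha>] nu a by simp
  have "hdelta \<nu> \<delta> \<theta> l - \<delta> * hstar \<nu> \<alpha> l
          = \<delta> * ((g * s + (\<Sum>n. alias_pair_deriv \<nu> \<alpha> l n))/(g + T) - s)"
    using hdelta_eq[OF assms] alias_sum_split[OF nu a l] hstar_eq_matern_score[of \<nu> \<alpha> l] nu a
    unfolding \<alpha>_def g_def s_def T_def by (simp add: right_diff_distrib)
  moreover have "g * \<bar>(g * s + (\<Sum>n. alias_pair_deriv \<nu> \<alpha> l n))/(g + T) - s\<bar> \<le> 2*q*T"
    using alias_tail_bounds(1)[OF nu a l, folded T_def]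
      matern_score_bound[of \<nu> \<alpha> l, folded s_def q_def]
      alias_tail_deriv_bound[OF nu a l, folded T_def q_def] nu a
    by (intro perturbed_quotient_bound[OF g]) auto
  ultimately have "g * \<bar>hdelta \<nu> \<delta> \<theta> l - \<delta> * hstar \<nu> \<alpha> l\<bar> \<le> \<delta> * (2*q*T)"
    using d by (simp add: abs_mult mult.left_commute[of g] mult_left_mono)
  also have "\<delta> * (2*q*T) = 2*(4*\<nu>+1)/\<theta> * T"
    unfolding q_def \<alpha>_def using d th by (simp add: field_simps)
  finally show ?thesis unfolding g_def T_def \<alpha>_def .
qed

lemma aliased_density_estimates:
  assumes nu: "\<nu> \<ge> 1/2" and d: "0 < \<delta>" and th: "0 < \<theta>lo" "\<theta>lo \<le> \<theta>" "\<theta> \<le> \<theta>hi"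
    and l: "\<bar>l\<bar> \<le> pi"
  defines "K \<equiv> 2 * C_nu \<nu> * \<theta>hi powr (2*\<nu>) * inv_square_sum"
  shows "gstar \<nu> (\<delta>*\<theta>) l \<le> gdelta \<nu> \<delta> \<theta> l"
    and "gdelta \<nu> \<delta> \<theta> l \<le> gstar \<nu> (\<delta>*\<theta>) l + K * \<delta> powr (2*\<nu>)"
    and "gstar \<nu> (\<delta>*\<theta>) l * \<bar>hdelta \<nu> \<delta> \<theta> l - \<delta> * hstar \<nu> (\<delta>*\<theta>) l\<bar>
           \<le> 2*(4*\<nu>+1)/\<theta>lo * K * \<delta> powr (2*\<nu>)"
proof -
  have a: "\<delta>*\<theta> > 0" and t: "\<theta> > 0" using d th by auto
  have split: "gdelta \<nu> \<delta> \<theta> l = gstar \<nu> (\<delta>*\<theta>) l + alias_tail \<nu> (\<delta>*\<theta>) l"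
    using alias_sum_split[OF nu a l] by (simp add: gdelta_eq_alias_sum)
  have "alias_tail \<nu> (\<delta>*\<theta>) l \<le> 2 * C_nu \<nu> * (\<delta>*\<theta>) powr (2*\<nu>) * inv_square_sum"
    using alias_tail_bounds(2)[OF nu a l] .
  also have "\<dots> \<le> 2 * C_nu \<nu> * (\<delta> powr (2*\<nu>) * \<theta>hi powr (2*\<nu>)) * inv_square_sum"
    using C_nu_pos[of \<nu>] inv_square_sum_nonneg d th nu
    by (intro mult_right_mono mult_left_mono) (auto simp: powr_mult intro: powr_mono2)
  finally have tail: "0 \<le> alias_tail \<nu> (\<delta>*\<theta>) l" "alias_tail \<nu> (\<delta>*\<theta>) l \<le> K * \<delta> powr (2*\<nu>)"
    using alias_tail_bounds(1)[OF nu a l] unfolding K_def by (simp_all add: mult_ac)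
  then show "gstar \<nu> (\<delta>*\<theta>) l \<le> gdelta \<nu> \<delta> \<theta> l"
    and "gdelta \<nu> \<delta> \<theta> l \<le> gstar \<nu> (\<delta>*\<theta>) l + K * \<delta> powr (2*\<nu>)"
    using split by simp_all
  have "2*(4*\<nu>+1)/\<theta> * alias_tail \<nu> (\<delta>*\<theta>) l \<le> 2*(4*\<nu>+1)/\<theta>lo * (K * \<delta> powr (2*\<nu>))"
    using tail th nu by (intro mult_mono divide_left_mono) auto
  with hdelta_score_error[OF nu d t l]
  show "gstar \<nu> (\<delta>*\<theta>) l * \<bar>hdelta \<nu> \<delta> \<theta> l - \<delta> * hstar \<nu> (\<delta>*\<theta>) l\<bar>
          \<le> 2*(4*\<nu>+1)/\<theta>lo * K * \<delta> powr (2*\<nu>)"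
    by (simp add: mult.assoc)
qed

theorem lemma5p1:
  fixes \<nu> \<theta>lo \<theta>hi :: real
  assumes "\<nu> \<ge> 1/2" and "0 < \<theta>lo" and "\<theta>lo \<le> \<theta>hi"
  shows "\<exists>C>0. \<forall>\<delta> \<in> {0<..1}. \<forall>\<theta> \<in> {\<theta>lo..\<theta>hi}. \<forall>l \<in> {-pi..pi}.
           inverse C * \<delta> powr (2 * \<nu>) \<le> gstar \<nu> (\<delta> * \<theta>) l
         \<and> gstar \<nu> (\<delta> * \<theta>) l \<le> gdelta \<nu> \<delta> \<theta> l
         \<and> gdelta \<nu> \<delta> \<theta> l \<le> gstar \<nu> (\<delta> * \<theta>) l + C * \<delta> powr (2 * \<nu>)
         \<and> gstar \<nu> (\<delta> * \<theta>) l * \<bar>hdelta \<nu> \<delta> \<theta> l - \<delta> * hstar \<nu> (\<delta> * \<theta>) l\<bar>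
             \<le> C * \<delta> powr (2 * \<nu>)"
proof -
  have nu: "\<nu> > 0" using assms by simp
  define c where "c = C_nu \<nu> * \<theta>lo powr (2*\<nu>) * (\<theta>hi\<^sup>2 + pi\<^sup>2) powr (-(\<nu>+1/2))"
  define K where "K = 2 * C_nu \<nu> * \<theta>hi powr (2*\<nu>) * inv_square_sum"
  define q where "q = 2*(4*\<nu>+1)/\<theta>lo"
  define C where "C = max (inverse c) (max K (q * K))"
  have "c > 0" unfolding c_def using C_nu_pos[OF nu] assms by (simp add: add_pos_nonneg)
  then have C: "C > 0" "inverse C \<le> c" "K \<le> C" "q * K \<le> C"
    unfolding C_def by (auto simp: less_max_iff_disj le_max_iff_disj inverse_le_imp_le)
  show ?thesis
  proof (intro exI[of _ C] conjI C(1) ballI)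
    fix \<delta> \<theta> l :: real assume "\<delta> \<in> {0<..1}" "\<theta> \<in> {\<theta>lo..\<theta>hi}" "l \<in> {-pi..pi}"
    then have d: "0 < \<delta>" "\<delta> \<le> 1" and th: "\<theta>lo \<le> \<theta>" "\<theta> \<le> \<theta>hi" and l: "\<bar>l\<bar> \<le> pi"
      by auto
    have dp: "\<delta> powr (2*\<nu>) \<ge> 0" by simp
    note est = aliased_density_estimates[OF assms(1) d(1) assms(2) th l, folded K_def q_def]
    show "inverse C * \<delta> powr (2 * \<nu>) \<le> gstar \<nu> (\<delta> * \<theta>) l"
      using gstar_lower_bound[OF nu d assms(2) th l, folded c_def] mult_right_mono[OF C(2) dp] by linarith
    show "gstar \<nu> (\<delta> * \<theta>) l \<le> gdelta \<nu> \<delta> \<theta> l" by (rule est(1))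
    show "gdelta \<nu> \<delta> \<theta> l \<le> gstar \<nu> (\<delta> * \<theta>) l + C * \<delta> powr (2 * \<nu>)"
      using est(2) mult_right_mono[OF C(3) dp] by linarith
    show "gstar \<nu> (\<delta> * \<theta>) l * \<bar>hdelta \<nu> \<delta> \<theta> l - \<delta> * hstar \<nu> (\<delta> * \<theta>) l\<bar> \<le> C * \<delta> powr (2 * \<nu>)"
      using est(3) mult_right_mono[OF C(4) dp] by linarith
  qed
qed

end
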